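(* Let $S\subseteq[12]$ be such that $\mathsf{MAIS}(G^*_S)<\alpha(G^*_{S,u})$. Then for any valid index code for the problem $\mathcal{B}^*_S$ with locality $1$, whose receivers $u_1,u_2,u_3$ observe codeword symbols indexed by $R_1,R_2,R_3$ respectively, we have $|R_i\cap R_j|=0$ for every $1\le i<j\le3$.
   Context: Index coding model. A unicast index coding problem has receivers $u_1,\dots,u_n$ and messages $\mathbf{x}_j$, each a vector in $\mathcal{A}^m$ for a finite alphabet $\mathcal{A}$ and positive integer $m$. Receiver $u_i$ demands $\mathbf{x}_j$, $j\in W_i$, and knows $\mathbf{x}_j$, $j\in K_i$, with $W_i\cap K_i=\emptyset$, the $W_i$ pairwise disjoint and every message demanded by exactly one receiver. An index code consists of an encoder mapping the messages to a codeword $\mathbf{c}\in\mathcal{A}^\ell$, subsets $R_i\subseteq[\ell]$ (receiver $u_i$ observes only $\mathbf{c}_{R_i}$), and decoders at each $u_i$ mapping $(\mathbf{c}_{R_i},\mathbf{x}_{K_i})$ to $\mathbf{x}_{W_i}$; it is valid if every receiver decodes correctly for all message values. The locality at $u_i$ is $|R_i|/(m|W_i|)$ and the locality of the code is the maximum over receivers (receivers with no demand impose no constraint). The problem $\mathcal{B}^*$ has three receivers and 12 messages with $W_1=\{1,2,3,4\}$, $W_2=\{5,6,7,8\}$, $W_3=\{9,10,11,12\}$, $K_1=\{5,6,9,10\}$, $K_2=\{1,2,9,11\}$, $K_3=\{1,3,5,7\}$. For $S\subseteq[12]$, $\mathcal{B}^*_S$ is the sub-problem with receivers $u_1,u_2,u_3$,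 messages $\mathbf{x}_j$, $j\in S$, demand sets $W_i\cap S$ and side information sets $K_i\cap S$. $G^*$ is the directed graph on $[12]$ with a directed edge $(a,b)$ iff $b\in K_i$ where $a\in W_i$; $G^*_u$ is the undirected graph on $[12]$ with $\{a,b\}$ an edge iff both $(a,b)$ and $(b,a)$ are edges of $G^*$; $G^*_S$, $G^*_{S,u}$ are the subgraphs induced by $S$. $\mathsf{MAIS}(D)$ is the maximum number of vertices of an acyclic induced subgraph of a directed graph $D$; $\alpha$ is the independence number. *)

theory Defs
  imports Complex_Main "HOL-Library.FuncSet"
begin

text \<open>Demand sets W_i and side-information sets K_i (receivers i = 1,2,3).\<close>

definition W :: "nat \<Rightarrow> nat set" where
  "W i = (if i = 1 then {1,2,3,4} else if i = 2 then {5,6,7,8}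
          else if i = 3 then {9,10,11,12} else {})"

definition K :: "nat \<Rightarrow> nat set" where
  "K i = (if i = 1 then {5,6,9,10} else if i = 2 then {1,2,9,11}
          else if i = 3 then {1,3,5,7} else {})"

definition receivers :: "nat set" where
  "receivers = {1,2,3}"

definition Gstar_edge :: "nat \<Rightarrow> nat \<Rightarrow> bool" where
  "Gstar_edge a b \<longleftrightarrow> (\<exists>i\<in>receivers. a \<in> W i \<and> b \<in> K i)"

definition Gstar_u_edge :: "nat \<Rightarrow> nat \<Rightarrow> bool" where
  "Gstar_u_edge a b \<longleftrightarrow> Gstar_edge a b \<and> Gstar_edge b a"

definition Gstar_rel :: "nat set \<Rightarrow> (nat \<times> nat) set" where
  "Gstar_rel V = {(a, b). a \<in> V \<and> b \<in> V \<and> Gstar_edge a b}"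

definition MAIS :: "nat set \<Rightarrow> nat" where
  "MAIS S = Max {card V | V. V \<subseteq> S \<and> acyclic (Gstar_rel V)}"

definition alpha_u :: "nat set \<Rightarrow> nat" where
  "alpha_u S = Max {card V | V. V \<subseteq> S \<and> (\<forall>a\<in>V. \<forall>b\<in>V. \<not> Gstar_u_edge a b)}"

text \<open>A message assignment: x j k is the k-th coordinate (k < m) of message x_j,
  with entries taking values in the alphabet (the type 'a).\<close>
type_synonym 'a msgs = "nat \<Rightarrow> nat \<Rightarrow> 'a"

definition restrict_msgs :: "nat set \<Rightarrow> nat \<Rightarrow> 'a msgs \<Rightarrow> 'a msgs" where
  "restrict_msgs T m x = (\<lambda>j k. if j \<in> T \<and> k < m then x j k else undefined)"

text \<open>Valid index code for B*_S with message length m and code length l: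
  encoder enc maps the messages x_j (j in S) to a codeword c (symbols c t, t in [l]);
  receiver u_i observes c restricted to R_i \<subseteq> [l] and the side information x_j, j in K_i \<inter> S,
  and its decoder dec i must return all demanded messages x_j, j in W_i \<inter> S.\<close>
definition valid_index_code ::
  "nat set \<Rightarrow> nat \<Rightarrow> nat \<Rightarrow> ('a msgs \<Rightarrow> (nat \<Rightarrow> 'a)) \<Rightarrow> (nat \<Rightarrow> nat set)
    \<Rightarrow> (nat \<Rightarrow> (nat \<Rightarrow> 'a) \<Rightarrow> 'a msgs \<Rightarrow> 'a msgs) \<Rightarrow> bool" where
  "valid_index_code S m l enc R dec \<longleftrightarrow>
     (\<forall>i\<in>receivers. R i \<subseteq> {1..l}) \<and>
     (\<forall>x :: 'a msgs. \<forall>i\<in>receivers. \<forall>j\<in>W i \<inter> S. \<forall>k<m.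
        dec i (restrict (enc (restrict_msgs S m x)) (R i)) (restrict_msgs (K i \<inter> S) m x) j k
          = x j k)"

definition locality :: "nat set \<Rightarrow> nat \<Rightarrow> (nat \<Rightarrow> nat set) \<Rightarrow> real" where
  "locality S m R = Max {real (card (R i)) / real (m * card (W i \<inter> S)) | i.
                          i \<in> receivers \<and> W i \<inter> S \<noteq> {}}"

end

theory Submission
  imports Defs
begin

(* The edges of G*_u are exactly the two-cycles of G*, so a cycle induced by an independent set of
   G*_u uses one-way edges only, and every such cycle contains the triangle 3 -> 6 -> 11 or the
   triangle 2 -> 10 -> 7.  A maximum independent set of G*_{S,u} that is larger than MAIS(G*_S)
   induces a cycle, hence contains a triangle; no other vertex of S can be adjacent in G*_u to that
   triangle, since exchanging it for a suitable triangle vertex would give an acyclic set of size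
   alpha(G*_{S,u}).  So S consists of a triangle and some of its non-neighbours 4, 8, 12: every
   receiver demands something and, between two receivers, side information flows one way only.

   Locality 1 means receiver u_r observes at most m |W_r \<inter> S| symbols, while with its side
   information fixed it must distinguish all q^(m |W_r \<inter> S|) values of its demand.  So its view is a
   bijective image of the demanded messages, and does not depend on messages it neither demands
   nor knows.  If u_r and u_s shared a symbol while u_s knows nothing of u_r's demand, that symbol
   would stay fixed as u_r's demand varies, leaving too few values to encode it. *)

lemma Gstar_edge_iff:
  "Gstar_edge a b \<longleftrightarrow>
     a \<in> {1,2,3,4} \<and> b \<in> {5,6,9,10} \<or> a \<in> {5,6,7,8} \<and> b \<in> {1,2,9,11} \<or>
     a \<in> {9,10,11,12} \<and> b \<in> {1,3,5,7}"
  unfolding Gstar_edge_def receivers_def W_def K_def by auto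

lemma acyclic_if_sorted_wrt_no_back_edge:
  assumes "r \<subseteq> set xs \<times> set xs" and "\<And>a. (a, a) \<notin> r"
    and "sorted_wrt (\<lambda>a b. (b, a) \<notin> r) xs"
  shows "acyclic r"
proof -
  define pos where "pos a = length (takeWhile (\<lambda>y. y \<noteq> a) xs)" for a
  have at: "pos a < length xs \<and> xs ! pos a = a" if "a \<in> set xs" for a
    using that unfolding pos_def by (induction xs) auto
  have forward: "pos a < pos b" if ab: "(a, b) \<in> r" for a b
  proof -
    from ab assms(1,2) have a: "a \<in> set xs" and b: "b \<in> set xs" and "a \<noteq> b" by blast+
    have "\<not> pos b < pos a"
    proof
      assume "pos b < pos a"
      then have "(xs ! pos a, xs ! pos b) \<notin> r"
        using sorted_wrt_nth_less[OF assms(3), of "pos b" "pos a"] at[OF a] by simp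
      with at[OF a] at[OF b] ab show False by simp
    qed
    moreover have "pos a \<noteq> pos b"
    proof
      assume "pos a = pos b"
      have "a = xs ! pos a" using at[OF a] by simp
      also have "\<dots> = b" using at[OF b] \<open>pos a = pos b\<close> by simp
      finally show False using \<open>a \<noteq> b\<close> by simp
    qed
    ultimately show ?thesis by simp
  qed
  have "r \<subseteq> inv_image less_than pos" using forward by auto
  hence "wf r" using wf_subset wf_inv_image wf_less_than by blast
  thus ?thesis by (rule wf_acyclic)
qed

lemma Gstar_edge_irrefl: "\<not> Gstar_edge a a"
  by (auto simp: Gstar_edge_iff)

lemma acyclic_Gstar_rel_if_sorted:
  assumes "V \<subseteq> set xs" "sorted_wrt (\<lambda>a b. \<not> Gstar_edge b a) xs"
  shows "acyclic (Gstar_rel V)"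
  using assms
  by (intro acyclic_if_sorted_wrt_no_back_edge[where xs = xs])
     (auto simp: Gstar_rel_def Gstar_edge_irrefl elim: sorted_wrt_mono_rel[rotated])

definition independent :: "nat set \<Rightarrow> bool" where
  "independent V \<longleftrightarrow> (\<forall>a\<in>V. \<forall>b\<in>V. \<not> Gstar_u_edge a b)"

(* Two-cycles of G* are edges of G*_u, so inside an independent set only one-way edges remain. *)
lemma acyclic_Gstar_rel_independent_if_sorted:
  assumes "V \<subseteq> set xs" "independent V"
    and "sorted_wrt (\<lambda>a b. \<not> (Gstar_edge b a \<and> \<not> Gstar_edge a b)) xs"
  shows "acyclic (Gstar_rel V)"
  using assms
  by (intro acyclic_if_sorted_wrt_no_back_edge[where xs = xs])
     (auto simp: Gstar_rel_def Gstar_edge_irrefl independent_def Gstar_u_edge_def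
           elim: sorted_wrt_mono_rel[rotated])

lemma acyclic_Gstar_rel_mono:
  "V \<subseteq> U \<Longrightarrow> acyclic (Gstar_rel U) \<Longrightarrow> acyclic (Gstar_rel V)"
  by (erule acyclic_subset) (auto simp: Gstar_rel_def)

lemma atLeastAtMost_1_12: "{1..12::nat} = {1,2,3,4,5,6,7,8,9,10,11,12}"
  by (rule set_eqI) (simp, arith)

lemma one_way_order_avoiding_triangles:
  assumes "x \<in> {3,6,11}" "y \<in> {2,7,10}"
  shows "\<exists>xs. {1..12} - {x, y} \<subseteq> set xs \<and>
    sorted_wrt (\<lambda>a b. \<not> (Gstar_edge b a \<and> \<not> Gstar_edge a b)) xs"
  using assms unfolding atLeastAtMost_1_12
  (* the cases (x, y) arrive as (3,2), (3,7), (3,10), (6,2), (11,2), (6,7), (6,10), (11,7), (11,10) *)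
  apply (elim insertE emptyE)
  subgoal by (intro exI[of _ "[8,12,4,6,10,9,11,5,7,1]"]) (auto simp: Gstar_edge_iff)
  subgoal by (intro exI[of _ "[8,12,4,2,6,10,9,11,5,1]"]) (auto simp: Gstar_edge_iff)
  subgoal by (intro exI[of _ "[8,12,4,7,5,6,2,11,9,1]"]) (auto simp: Gstar_edge_iff)
  subgoal by (intro exI[of _ "[8,12,4,11,9,10,3,7,5,1]"]) (auto simp: Gstar_edge_iff)
  subgoal by (intro exI[of _ "[8,12,4,3,10,6,5,7,9,1]"]) (auto simp: Gstar_edge_iff)
  subgoal by (intro exI[of _ "[8,12,4,2,11,9,10,1,3,5]"]) (auto simp: Gstar_edge_iff)
  subgoal by (intro exI[of _ "[8,12,4,11,7,3,1,2,5,9]"]) (auto simp: Gstar_edge_iff)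
  subgoal by (intro exI[of _ "[8,12,4,2,1,3,10,6,5,9]"]) (auto simp: Gstar_edge_iff)
  subgoal by (intro exI[of _ "[8,12,4,3,7,5,6,1,2,9]"]) (auto simp: Gstar_edge_iff)
  done

lemma cyclic_independent_set_contains_triangle:
  assumes "I \<subseteq> {1..12}" "independent I" "\<not> acyclic (Gstar_rel I)"
  shows "{3,6,11} \<subseteq> I \<or> {2,7,10} \<subseteq> I"
proof (rule ccontr)
  assume "\<not> ?thesis"
  then obtain x y where xy: "x \<in> {3,6,11}" "y \<in> {2,7,10}" "x \<notin> I" "y \<notin> I"
    by auto
  obtain xs where "{1..12} - {x, y} \<subseteq> set xs"
    and "sorted_wrt (\<lambda>a b. \<not> (Gstar_edge b a \<and> \<not> Gstar_edge a b)) xs"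
    using one_way_order_avoiding_triangles[OF xy(1,2)] by blast
  with assms(1,2) xy(3,4) have "acyclic (Gstar_rel I)"
    by (intro acyclic_Gstar_rel_independent_if_sorted[where xs = xs]) auto
  with assms(3) show False ..
qed

lemma finite_card_subsets: "finite S \<Longrightarrow> finite {card V | V. V \<subseteq> S \<and> P V}"
  by (rule finite_subset[where B = "{..card S}"]) (auto intro: card_mono)

lemma card_le_Max_card_subsets:
  "finite S \<Longrightarrow> V \<subseteq> S \<Longrightarrow> P V \<Longrightarrow> card V \<le> Max {card V | V. V \<subseteq> S \<and> P V}"
  by (rule Max_ge[OF finite_card_subsets]) auto

lemma Max_card_subsets_attained:
  assumes "finite S" "P {}"
  obtains V where "V \<subseteq> S" "P V" "card V = Max {card V | V. V \<subseteq> S \<and> P V}"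
proof -
  have "Max {card V | V. V \<subseteq> S \<and> P V} \<in> {card V | V. V \<subseteq> S \<and> P V}"
    by (rule Max_in[OF finite_card_subsets[OF assms(1)]]) (use assms(2) in blast)
  then show ?thesis using that by auto
qed

lemma exchange_into_acyclic_impossible:
  assumes "finite S" "MAIS S < alpha_u S" "I \<subseteq> S" "card I = alpha_u S"
    and "v \<in> I" "e \<notin> I" "acyclic (Gstar_rel (insert e (I - {v})))"
  shows "e \<notin> S"
proof
  assume "e \<in> S"
  have "finite I" using assms(1,3) finite_subset by blast
  with assms(5,6) have "card (insert e (I - {v})) = card I"
    by (simp add: card_Suc_Diff1 del: card_Diff_insert)
  moreover have "card (insert e (I - {v})) \<le> MAIS S"
    unfolding MAIS_def using assms \<open>e \<in> S\<close> by (intro card_le_Max_card_subsets) auto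
  ultimately show False using assms(2,4) by simp
qed

lemma independent_with_triangle_3_6_11:
  assumes "I \<subseteq> {1..12}" "independent I" "{3,6,11} \<subseteq> I"
  shows "I \<subseteq> {3,4,6,8,11,12}"
proof
  fix a assume "a \<in> I"
  with assms(2,3) have "\<not> Gstar_u_edge a b" if "b \<in> {3,6,11}" for b
    using that unfolding independent_def by blast
  moreover have "a \<in> {1,2,3,4,5,6,7,8,9,10,11,12}"
    using assms(1) \<open>a \<in> I\<close> atLeastAtMost_1_12 by auto
  ultimately show "a \<in> {3,4,6,8,11,12}" unfolding Gstar_u_edge_def Gstar_edge_iff by auto
qed

lemma independent_with_triangle_2_7_10:
  assumes "I \<subseteq> {1..12}" "independent I" "{2,7,10} \<subseteq> I"
  shows "I \<subseteq> {2,4,7,8,10,12}"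
proof
  fix a assume "a \<in> I"
  with assms(2,3) have "\<not> Gstar_u_edge a b" if "b \<in> {2,7,10}" for b
    using that unfolding independent_def by blast
  moreover have "a \<in> {1,2,3,4,5,6,7,8,9,10,11,12}"
    using assms(1) \<open>a \<in> I\<close> atLeastAtMost_1_12 by auto
  ultimately show "a \<in> {2,4,7,8,10,12}" unfolding Gstar_u_edge_def Gstar_edge_iff by auto
qed

lemma exchange_acyclic_3_6_11:
  assumes "e \<in> {1,2,5,7,9,10}"
  shows "\<exists>v\<in>{3,6,11}. acyclic (Gstar_rel (insert e ({3,4,6,8,11,12} - {v})))"
  using assms
  apply (elim insertE emptyE)
  subgoal by (rule bexI[of _ 6], rule acyclic_Gstar_rel_if_sorted[where xs = "[12,8,4,11,3,1]"])
    (auto simp: Gstar_edge_iff)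
  subgoal by (rule bexI[of _ 6], rule acyclic_Gstar_rel_if_sorted[where xs = "[12,8,4,11,2,3]"])
    (auto simp: Gstar_edge_iff)
  subgoal by (rule bexI[of _ 11], rule acyclic_Gstar_rel_if_sorted[where xs = "[12,4,8,3,6,5]"])
    (auto simp: Gstar_edge_iff)
  subgoal by (rule bexI[of _ 11], rule acyclic_Gstar_rel_if_sorted[where xs = "[12,4,8,3,7,6]"])
    (auto simp: Gstar_edge_iff)
  subgoal by (rule bexI[of _ 3], rule acyclic_Gstar_rel_if_sorted[where xs = "[4,8,12,6,11,9]"])
    (auto simp: Gstar_edge_iff)
  subgoal by (rule bexI[of _ 3], rule acyclic_Gstar_rel_if_sorted[where xs = "[4,8,12,6,10,11]"])
    (auto simp: Gstar_edge_iff)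
  done

lemma exchange_acyclic_2_7_10:
  assumes "e \<in> {1,3,5,6,9,11}"
  shows "\<exists>v\<in>{2,7,10}. acyclic (Gstar_rel (insert e ({2,4,7,8,10,12} - {v})))"
  using assms
  apply (elim insertE emptyE)
  subgoal by (rule bexI[of _ 10], rule acyclic_Gstar_rel_if_sorted[where xs = "[8,12,4,7,2,1]"])
    (auto simp: Gstar_edge_iff)
  subgoal by (rule bexI[of _ 10], rule acyclic_Gstar_rel_if_sorted[where xs = "[8,12,4,7,3,2]"])
    (auto simp: Gstar_edge_iff)
  subgoal by (rule bexI[of _ 2], rule acyclic_Gstar_rel_if_sorted[where xs = "[12,4,8,10,7,5]"])
    (auto simp: Gstar_edge_iff)
  subgoal by (rule bexI[of _ 2], rule acyclic_Gstar_rel_if_sorted[where xs = "[12,4,8,10,6,7]"])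
    (auto simp: Gstar_edge_iff)
  subgoal by (rule bexI[of _ 7], rule acyclic_Gstar_rel_if_sorted[where xs = "[8,4,12,2,10,9]"])
    (auto simp: Gstar_edge_iff)
  subgoal by (rule bexI[of _ 7], rule acyclic_Gstar_rel_if_sorted[where xs = "[8,4,12,2,11,10]"])
    (auto simp: Gstar_edge_iff)
  done

lemma confined_by_exchange:
  assumes "finite S" "MAIS S < alpha_u S" "I \<subseteq> S" "card I = alpha_u S"
    and "T \<subseteq> I" "I \<subseteq> U" "X \<inter> U = {}"
    and exchange: "\<And>e. e \<in> X \<Longrightarrow> \<exists>v\<in>T. acyclic (Gstar_rel (insert e (U - {v})))"
  shows "S \<inter> X = {}"
proof -
  have "e \<notin> S" if e: "e \<in> X" for e
  proof -
    obtain v where "v \<in> T" "acyclic (Gstar_rel (insert e (U - {v})))"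
      using exchange[OF e] by blast
    moreover have "insert e (I - {v}) \<subseteq> insert e (U - {v})" using assms(6) by blast
    ultimately show ?thesis
      using assms(1-7) e
      by (intro exchange_into_acyclic_impossible[of S I v]) (auto intro: acyclic_Gstar_rel_mono)
  qed
  thus ?thesis by blast
qed

theorem MAIS_less_alpha_u_cases:
  assumes "S \<subseteq> {1..12}" "MAIS S < alpha_u S"
  shows "{3,6,11} \<subseteq> S \<and> S \<subseteq> {3,4,6,8,11,12} \<or>
    {2,7,10} \<subseteq> S \<and> S \<subseteq> {2,4,7,8,10,12}"
proof -
  have S: "finite S" using assms(1) finite_subset by blast
  obtain I where I: "I \<subseteq> S" "independent I" "card I = alpha_u S"
    using Max_card_subsets_attained[OF S, of independent]
    unfolding alpha_u_def independent_def by auto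
  have "\<not> acyclic (Gstar_rel I)"
  proof
    assume "acyclic (Gstar_rel I)"
    hence "card I \<le> MAIS S" unfolding MAIS_def by (rule card_le_Max_card_subsets[OF S I(1)])
    with I(3) assms(2) show False by simp
  qed
  with I assms(1) have "{3,6,11} \<subseteq> I \<or> {2,7,10} \<subseteq> I"
    by (intro cyclic_independent_set_contains_triangle) auto
  then show ?thesis
  proof
    assume T: "{3,6,11} \<subseteq> I"
    with I assms(1) have U: "I \<subseteq> {3,4,6,8,11,12}" by (intro independent_with_triangle_3_6_11) auto
    have "S \<inter> {1,2,5,7,9,10} = {}"
      by (rule confined_by_exchange[OF S assms(2) I(1,3) T U _ exchange_acyclic_3_6_11]) auto
    with T I(1) assms(1) show ?thesis unfolding atLeastAtMost_1_12 by blast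
  next
    assume T: "{2,7,10} \<subseteq> I"
    with I assms(1) have U: "I \<subseteq> {2,4,7,8,10,12}" by (intro independent_with_triangle_2_7_10) auto
    have "S \<inter> {1,3,5,6,9,11} = {}"
      by (rule confined_by_exchange[OF S assms(2) I(1,3) T U _ exchange_acyclic_2_7_10]) auto
    with T I(1) assms(1) show ?thesis unfolding atLeastAtMost_1_12 by blast
  qed
qed

definition override_msgs :: "nat set \<Rightarrow> nat \<Rightarrow> 'a msgs \<Rightarrow> 'a msgs \<Rightarrow> 'a msgs" where
  "override_msgs T m g x = (\<lambda>j k. if j \<in> T \<and> k < m then g j k else x j k)"

definition msg_blocks :: "nat set \<Rightarrow> nat \<Rightarrow> 'a msgs set" where
  "msg_blocks T m = (\<Pi>\<^sub>E j\<in>T. \<Pi>\<^sub>E k\<in>{..<m}. UNIV)"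

lemma restrict_msgs_cong:
  "(\<And>j k. j \<in> T \<Longrightarrow> k < m \<Longrightarrow> x j k = y j k) \<Longrightarrow>
    restrict_msgs T m x = restrict_msgs T m y"
  unfolding restrict_msgs_def by (intro ext) auto

lemma card_msg_blocks:
  "finite T \<Longrightarrow>
    card (msg_blocks T m :: ('a::finite) msgs set) = card (UNIV :: 'a set) ^ (m * card T)"
  unfolding msg_blocks_def by (simp add: card_PiE power_mult)

lemma msg_blocks_eqI:
  assumes "g \<in> msg_blocks T m" "g' \<in> msg_blocks T m"
    and "\<And>j k. j \<in> T \<Longrightarrow> k < m \<Longrightarrow> g j k = g' j k"
  shows "g = g'"
proof (rule PiE_ext[OF assms(1,2)[unfolded msg_blocks_def]])
  fix j assume "j \<in> T"
  with assms(1,2) have "g j \<in> (\<Pi>\<^sub>E k\<in>{..<m}. UNIV)" "g' j \<in> (\<Pi>\<^sub>E k\<in>{..<m}. UNIV)"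
    by (auto simp: msg_blocks_def)
  then show "g j = g' j" by (rule PiE_ext) (simp add: assms(3) \<open>j \<in> T\<close>)
qed

lemma card_PiE_fixed_at:
  assumes "finite A" "t \<in> A"
  shows "card (\<Pi>\<^sub>E i\<in>A. if i = t then {c} else (UNIV :: ('a::finite) set)) =
    card (UNIV :: 'a set) ^ (card A - 1)"
proof -
  have "card (\<Pi>\<^sub>E i\<in>A. if i = t then {c} else (UNIV :: 'a set))
      = (\<Prod>i\<in>A. card (if i = t then {c} else (UNIV :: 'a set)))"
    using assms(1) by (simp add: card_PiE)
  also have "\<dots> = (\<Prod>i\<in>A - {t}. card (if i = t then {c} else (UNIV :: 'a set)))"
    using assms by (simp add: prod.remove)
  also have "\<dots> = (\<Prod>i\<in>A - {t}. card (UNIV :: 'a set))"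
    by (rule prod.cong) auto
  finally show ?thesis using assms by simp
qed

lemma demand_side_info_disjoint: "r \<in> receivers \<Longrightarrow> W r \<inter> K r = {}"
  unfolding receivers_def W_def K_def by auto

lemma demands_disjoint:
  "r \<in> receivers \<Longrightarrow> s \<in> receivers \<Longrightarrow> r \<noteq> s \<Longrightarrow> W r \<inter> W s = {}"
  unfolding receivers_def W_def by auto

context
  fixes S :: "nat set" and m l :: nat
    and enc :: "('a::finite) msgs \<Rightarrow> (nat \<Rightarrow> 'a)"
    and R :: "nat \<Rightarrow> nat set"
    and dec :: "nat \<Rightarrow> (nat \<Rightarrow> 'a) \<Rightarrow> 'a msgs \<Rightarrow> 'a msgs"
  assumes valid: "valid_index_code S m l enc R dec"
begin

definition observed :: "nat \<Rightarrow> 'a msgs \<Rightarrow> (nat \<Rightarrow> 'a)" where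
  "observed r x = restrict (enc (restrict_msgs S m x)) (R r)"

lemma decode_observed:
  "r \<in> receivers \<Longrightarrow> j \<in> W r \<inter> S \<Longrightarrow> k < m \<Longrightarrow>
    dec r (observed r x) (restrict_msgs (K r \<inter> S) m x) j k = x j k"
  using valid unfolding valid_index_code_def observed_def by blast

lemma finite_observed_symbols: "r \<in> receivers \<Longrightarrow> finite (R r)"
  using valid unfolding valid_index_code_def by (meson finite_atLeastAtMost finite_subset)

lemma observed_in_PiE: "observed r x \<in> (\<Pi>\<^sub>E t\<in>R r. UNIV)"
  unfolding observed_def by simp

lemma observed_determines_demand:
  assumes "r \<in> receivers" "observed r x = observed r y"
    and "\<And>j k. j \<in> K r \<inter> S \<Longrightarrow> k < m \<Longrightarrow> x j k = y j k"
    and "j \<in> W r \<inter> S" "k < m"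
  shows "x j k = y j k"
proof -
  have "restrict_msgs (K r \<inter> S) m x = restrict_msgs (K r \<inter> S) m y"
    using assms(3) by (rule restrict_msgs_cong)
  then show ?thesis
    using decode_observed[OF assms(1,4,5), of x] decode_observed[OF assms(1,4,5), of y] assms(2)
    by simp
qed

lemma inj_on_observed_override:
  assumes "r \<in> receivers"
  shows "inj_on (\<lambda>g. observed r (override_msgs (W r \<inter> S) m g z)) (msg_blocks (W r \<inter> S) m)"
proof (rule inj_onI)
  fix g g' assume g: "g \<in> msg_blocks (W r \<inter> S) m" "g' \<in> msg_blocks (W r \<inter> S) m"
    and eq: "observed r (override_msgs (W r \<inter> S) m g z) =
      observed r (override_msgs (W r \<inter> S) m g' z)"
  show "g = g'"
  proof (rule msg_blocks_eqI[OF g])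
    fix j k assume jk: "j \<in> W r \<inter> S" "k < m"
    have "override_msgs (W r \<inter> S) m g z i k' = override_msgs (W r \<inter> S) m g' z i k'"
      if "i \<in> K r \<inter> S" for i k'
      using that demand_side_info_disjoint[OF assms] by (auto simp: override_msgs_def)
    then have "override_msgs (W r \<inter> S) m g z j k = override_msgs (W r \<inter> S) m g' z j k"
      by (rule observed_determines_demand[OF assms eq _ jk])
    with jk show "g j k = g' j k" by (simp add: override_msgs_def)
  qed
qed

lemma observed_cong:
  "(\<And>j k. j \<in> S \<Longrightarrow> k < m \<Longrightarrow> x j k = y j k) \<Longrightarrow> observed r x = observed r y"
  unfolding observed_def by (subst restrict_msgs_cong[of S m x y]) auto

lemma card_observations_le_card_msg_blocks:
  assumes "r \<in> receivers" "finite S" "card (R r) \<le> m * card (W r \<inter> S)"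
  shows "card (\<Pi>\<^sub>E t\<in>R r. (UNIV :: 'a set)) \<le>
    card (msg_blocks (W r \<inter> S) m :: 'a msgs set)"
proof -
  have "card (UNIV :: 'a set) \<ge> 1" by (simp add: Suc_leI finite_UNIV_card_ge_0)
  then show ?thesis
    using assms finite_observed_symbols[OF assms(1)]
    by (simp add: card_PiE card_msg_blocks power_increasing)
qed

lemma observed_determined_by_demand_and_side_info:
  assumes r: "r \<in> receivers" and S: "finite S" and bound: "card (R r) \<le> m * card (W r \<inter> S)"
    and agree: "\<And>j k. j \<in> (W r \<union> K r) \<inter> S \<Longrightarrow> k < m \<Longrightarrow> x j k = z j k"
  shows "observed r x = observed r z"
proof -
  let ?D = "msg_blocks (W r \<inter> S) m :: 'a msgs set"
  let ?P = "\<Pi>\<^sub>E t\<in>R r. (UNIV :: 'a set)"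
  let ?\<phi> = "\<lambda>g. observed r (override_msgs (W r \<inter> S) m g z)"
  have "?\<phi> ` ?D = ?P"
  proof (rule card_subset_eq)
    show "finite ?P" using finite_observed_symbols[OF r] by (simp add: finite_PiE)
    show sub: "?\<phi> ` ?D \<subseteq> ?P" using observed_in_PiE by auto
    have "card (?\<phi> ` ?D) \<le> card ?P" using \<open>finite ?P\<close> sub by (rule card_mono)
    moreover have "card ?P \<le> card (?\<phi> ` ?D)"
      using card_observations_le_card_msg_blocks[OF r S bound]
        card_image[OF inj_on_observed_override[OF r]] by simp
    ultimately show "card (?\<phi> ` ?D) = card ?P" by (rule antisym)
  qed
  with observed_in_PiE have "observed r x \<in> ?\<phi> ` ?D" by simp
  then obtain g where g: "observed r x = ?\<phi> g" by blast
  have side: "x j k = override_msgs (W r \<inter> S) m g z j k" if "j \<in> K r \<inter> S" "k < m" for j k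
    using that agree demand_side_info_disjoint[OF r] by (auto simp: override_msgs_def)
  have "x j k = override_msgs (W r \<inter> S) m g z j k" if "j \<in> W r \<inter> S" "k < m" for j k
    by (rule observed_determines_demand[OF r g side that])
  then have "?\<phi> g = observed r z"
    using agree by (intro observed_cong) (auto simp: override_msgs_def)
  with g show ?thesis by simp
qed

lemma observed_symbols_disjoint_one_way:
  assumes r: "r \<in> receivers" and s: "s \<in> receivers" and "r \<noteq> s" and S: "finite S"
    and q: "card (UNIV :: 'a set) \<ge> 2"
    and bound_r: "card (R r) \<le> m * card (W r \<inter> S)"
    and bound_s: "card (R s) \<le> m * card (W s \<inter> S)"
    and "W r \<inter> K s \<inter> S = {}"
  shows "R r \<inter> R s = {}"
proof (rule ccontr)
  assume "R r \<inter> R s \<noteq> {}"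
  then obtain t where t: "t \<in> R r" "t \<in> R s" by blast
  fix z :: "'a msgs"
  let ?D = "msg_blocks (W r \<inter> S) m :: 'a msgs set"
  let ?P = "\<Pi>\<^sub>E i\<in>R r. if i = t then {observed s z t} else UNIV"
  let ?\<phi> = "\<lambda>g. observed r (override_msgs (W r \<inter> S) m g z)"
  have "?\<phi> g \<in> ?P" for g
  proof -
    have obs: "observed s (override_msgs (W r \<inter> S) m g z) = observed s z"
      using demands_disjoint[OF r s \<open>r \<noteq> s\<close>] \<open>W r \<inter> K s \<inter> S = {}\<close>
      by (intro observed_determined_by_demand_and_side_info[OF s S bound_s])
         (auto simp: override_msgs_def)
    have "?\<phi> g t = observed s z t" using fun_cong[OF obs, of t] t by (simp add: observed_def)
    then show ?thesis using observed_in_PiE[of r] by (auto simp: PiE_iff)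
  qed
  then have "card (?\<phi> ` ?D) \<le> card ?P"
    using finite_observed_symbols[OF r] by (intro card_mono) (simp add: finite_PiE, blast)
  also have "\<dots> = card (UNIV :: 'a set) ^ (card (R r) - 1)"
    by (rule card_PiE_fixed_at[OF finite_observed_symbols[OF r] t(1)])
  also have "\<dots> < card (UNIV :: 'a set) ^ card (R r)"
    using q t(1) finite_observed_symbols[OF r]
    by (intro power_strict_increasing diff_less) (auto simp: card_gt_0_iff)
  also have "\<dots> = card (\<Pi>\<^sub>E i\<in>R r. (UNIV :: 'a set))"
    using finite_observed_symbols[OF r] by (simp add: card_PiE)
  also have "\<dots> \<le> card ?D"
    by (rule card_observations_le_card_msg_blocks[OF r S bound_r])
  also have "\<dots> = card (?\<phi> ` ?D)"
    using card_image[OF inj_on_observed_override[OF r]] by simp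
  finally show False by simp
qed

lemma observed_symbols_disjoint:
  assumes "r \<in> receivers" "s \<in> receivers" "r \<noteq> s" "finite S" "card (UNIV :: 'a set) \<ge> 2"
    and "card (R r) \<le> m * card (W r \<inter> S)" "card (R s) \<le> m * card (W s \<inter> S)"
    and "W r \<inter> K s \<inter> S = {} \<or> W s \<inter> K r \<inter> S = {}"
  shows "R r \<inter> R s = {}"
  using assms(8)
proof
  assume "W r \<inter> K s \<inter> S = {}"
  then show ?thesis by (rule observed_symbols_disjoint_one_way[OF assms(1-7)])
next
  assume "W s \<inter> K r \<inter> S = {}"
  then have "R s \<inter> R r = {}"
    by (rule observed_symbols_disjoint_one_way[OF assms(2,1) assms(3)[symmetric] assms(4,5,7,6)])
  then show ?thesis by (simp only: Int_commute)
qed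

end

lemma card_observed_le_of_locality_le_1:
  assumes "finite S" "m > 0" "locality S m R \<le> 1" "r \<in> receivers" "W r \<inter> S \<noteq> {}"
  shows "card (R r) \<le> m * card (W r \<inter> S)"
proof -
  let ?ratio = "\<lambda>i. real (card (R i)) / real (m * card (W i \<inter> S))"
  have "finite {?ratio i | i. i \<in> receivers \<and> W i \<inter> S \<noteq> {}}"
    by (rule finite_subset[where B = "?ratio ` receivers"]) (auto simp: receivers_def)
  with assms(4,5) have "?ratio r \<le> locality S m R"
    unfolding locality_def by (intro Max_ge) auto
  with assms(3) have "?ratio r \<le> 1" by linarith
  moreover have "real (m * card (W r \<inter> S)) > 0"
    using assms(1,2,5) by (simp add: card_gt_0_iff)
  ultimately have "real (card (R r)) \<le> real (m * card (W r \<inter> S))"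
    by (simp only: divide_le_eq_1_pos)
  then show ?thesis by (simp only: of_nat_le_iff)
qed

theorem lemma5:
  fixes S :: "nat set" and m l :: nat
    and enc :: "('a::finite) msgs \<Rightarrow> (nat \<Rightarrow> 'a)"
    and R :: "nat \<Rightarrow> nat set"
    and dec :: "nat \<Rightarrow> (nat \<Rightarrow> 'a) \<Rightarrow> 'a msgs \<Rightarrow> 'a msgs"
  assumes "S \<subseteq> {1..12}"
    and "MAIS S < alpha_u S"
    and "card (UNIV :: 'a set) \<ge> 2"
    and "m > 0"
    and "valid_index_code S m l enc R dec"
    and "locality S m R = 1"
  shows "\<forall>i j. 1 \<le> i \<and> i < j \<and> j \<le> 3 \<longrightarrow> card (R i \<inter> R j) = 0"
proof -
  have S: "finite S" using assms(1) finite_subset by blast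
  have shape: "{3,6,11} \<subseteq> S \<and> S \<subseteq> {3,4,6,8,11,12} \<or>
    {2,7,10} \<subseteq> S \<and> S \<subseteq> {2,4,7,8,10,12}"
    using MAIS_less_alpha_u_cases[OF assms(1,2)] .
  have bound: "card (R r) \<le> m * card (W r \<inter> S)" if r: "r \<in> receivers" for r
    using shape r assms(6)
    by (intro card_observed_le_of_locality_le_1[OF S assms(4)]) (auto simp: receivers_def W_def)
  have one_way: "W i \<inter> K j \<inter> S = {} \<or> W j \<inter> K i \<inter> S = {}"
    if "i \<in> receivers" "j \<in> receivers" for i j
    using shape that by (auto simp: receivers_def W_def K_def)
  have disjoint: "R i \<inter> R j = {}" if ij: "i \<in> receivers" "j \<in> receivers" "i \<noteq> j" for i j
    using one_way[OF ij(1,2)]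
    by (rule observed_symbols_disjoint[OF assms(5) ij S assms(3) bound[OF ij(1)] bound[OF ij(2)]])
  show ?thesis
  proof (intro allI impI)
    fix i j :: nat assume "1 \<le> i \<and> i < j \<and> j \<le> 3"
    then have "i \<in> receivers" "j \<in> receivers" "i \<noteq> j" by (auto simp: receivers_def)
    with disjoint show "card (R i \<inter> R j) = 0" by simp
  qed
qed

end
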